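(* Let $n>2$ and let $M_n$ be the graph defined below. For every $k>0$ and all $i\ne j$ in $\{1,\dots,n\}$, the graph $\sigma^{ij}_{\bowtie}(M_n)$ is not a $k$-polygon-circle graph.
   Context: $M_n$ has $6n$ nodes $v_1,\dots,v_{6n}$: the nodes $v_1,\dots,v_{4n}$ form a path (edges $\{v_t,v_{t+1}\}$, $1\le t<4n$), and for each $i\in\{1,\dots,n\}$ there are the additional edges $\{v_{4i-3},v_{4n+i}\}$, $\{v_{4i-2},v_{5n+i}\}$ and $\{v_{4n+i},v_{5n+i}\}$. For $i\in\{1,\dots,n\}$, $H_i$ is the subgraph with vertices $v_{4n+i},v_{5n+i}$ and the edge between them, and $\sigma_i:V(H_1)\to V(H_i)$ is the isomorphism with $\sigma_i(v_{4n+1})=v_{5n+i}$, $\sigma_i(v_{5n+1})=v_{4n+i}$; $\sigma^{ij}=\sigma_i\circ\sigma_j^{-1}$. Crossing: given a graph $G$ and two independent isomorphic subgraphs $H=(V_1,E_1)$, $H'=(V_2,E_2)$ (disjoint vertex sets, no edges of $G$ between them) with isomorphism $\sigma:V_1\to V_2$, the crossing $\sigma_{\bowtie}(G)$ is obtained from $G$ by replacing every pair of edges $\{u,v\}\in E_1$, $\{\sigma(u),\sigma(v)\}\in E_2$ by the pair $\{u,\sigma(v)\}$, $\{\sigma(u),v\}$. A $k$-polygon-circle graph is the intersection graph of a family of convex polygons with $k$ vertices, all vertices lying on a common circle. *)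

theory Defs
  imports "HOL-Analysis.Analysis"
begin

text \<open>Graphs: vertex set V :: nat set, edge set E :: nat set set (2-element sets).
  Vertex v_t is represented by the natural number t.\<close>

definition M_vertices :: "nat \<Rightarrow> nat set" where
  "M_vertices n = {1..6*n}"

definition M_edges :: "nat \<Rightarrow> nat set set" where
  "M_edges n =
     {{t, t+1} | t. 1 \<le> t \<and> t < 4*n}
     \<union> (\<Union>i\<in>{1..n}. {{4*i-3, 4*n+i}, {4*i-2, 5*n+i}, {4*n+i, 5*n+i}})"

definition H_vertices :: "nat \<Rightarrow> nat \<Rightarrow> nat set" where
  "H_vertices n i = {4*n+i, 5*n+i}"

definition H_edges :: "nat \<Rightarrow> nat \<Rightarrow> nat set set" where
  "H_edges n i = {{4*n+i, 5*n+i}}"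

definition sigma :: "nat \<Rightarrow> nat \<Rightarrow> nat \<Rightarrow> nat" where
  "sigma n i x = (if x = 4*n+1 then 5*n+i else if x = 5*n+1 then 4*n+i else x)"

definition sigma_ij :: "nat \<Rightarrow> nat \<Rightarrow> nat \<Rightarrow> nat \<Rightarrow> nat" where
  "sigma_ij n i j = sigma n i \<circ> the_inv_into (H_vertices n 1) (sigma n j)"

text \<open>Crossing along an isomorphism s from a subgraph with edge set E1 onto another subgraph:
  every pair of edges {u,v} in E1, {s u, s v} in E is replaced by {u, s v}, {s u, v}.\<close>
definition crossing :: "nat set set \<Rightarrow> nat set set \<Rightarrow> (nat \<Rightarrow> nat) \<Rightarrow> nat set set" where
  "crossing E E1 s =
     (E - {e. e \<in> E1 \<and> s ` e \<in> E} - {s ` e | e. e \<in> E1 \<and> s ` e \<in> E})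
     \<union> {{u, s v} | u v. {u, v} \<in> E1 \<and> u \<noteq> v \<and> {s u, s v} \<in> E}"

text \<open>The polygon of vertex x is the convex hull of a set
  P x of exactly k points on the circle (such points are in convex position, so the hull is a
  convex polygon with exactly these k vertices).\<close>
definition k_polygon_circle :: "nat set \<Rightarrow> nat set set \<Rightarrow> nat \<Rightarrow> bool" where
  "k_polygon_circle V E k \<longleftrightarrow>
     (\<exists>(c :: real^2) (r :: real) (P :: nat \<Rightarrow> (real^2) set).
        r > 0 \<and>
        (\<forall>x\<in>V. finite (P x) \<and> card (P x) = k \<and> P x \<subseteq> sphere c r) \<and>
        (\<forall>x\<in>V. \<forall>y\<in>V. x \<noteq> y \<longrightarrow>
            ({x, y} \<in> E \<longleftrightarrow> convex hull (P x) \<inter> convex hull (P y) \<noteq> {})))"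

end

theory Submission
  imports Defs
begin

text \<open>Reading the vertices of each polygon as a finite set of angles on the circle, two polygons
  are disjoint exactly when their angle sets do not interleave; adjacency in a polygon-circle
  representation thus becomes interleaving of angle sets. In the crossed graph the vertices
  \<open>v_{4i-2}\<close> and \<open>v_{4j-3}\<close> are joined by three pairwise non-adjacent arms: the path between them
  and the two routes through the crossed rungs. Cut the circle open just before the polygon of
  \<open>v_{4i-2}\<close>. Every arm then reaches both the range of angles of \<open>v_{4i-2}\<close> and that of
  \<open>v_{4j-3}\<close>, so two non-interleaving arms are nested; among three arms one is nested both
  ways, and this forces its two halves apart although they are adjacent.\<close>

section \<open>Orientation of triangles in the plane\<close>

definition orient :: "real^2 \<Rightarrow> real^2 \<Rightarrow> real^2 \<Rightarrow> real" where
  "orient a b q = (b$1 - a$1) * (q$2 - a$2) - (b$2 - a$2) * (q$1 - a$1)"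

lemma orient_perm:
  "orient b q a = orient a b q" "orient q a b = orient a b q"
  "orient b a q = - orient a b q" "orient a q b = - orient a b q" "orient q b a = - orient a b q"
  unfolding orient_def by algebra+

lemma orient_self: "orient a b a = 0" "orient a b b = 0"
  unfolding orient_def by simp_all

lemma orient_convex_combination:
  "u + v = 1 \<Longrightarrow> orient a b (u *\<^sub>R x + v *\<^sub>R y) = u * orient a b x + v * orient a b y"
proof -
  assume "u + v = 1"
  then have v: "v = 1 - u" by simp
  show ?thesis unfolding v orient_def by (simp add: algebra_simps)
qed

lemma convex_orient_neg: "convex {q. orient a b q < 0}"
proof (rule convexI)
  fix x y and u v :: real
  assume "x \<in> {q. orient a b q < 0}" "y \<in> {q. orient a b q < 0}" and uv: "0 \<le> u" "0 \<le> v" "u + v = 1"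
  then have x: "orient a b x < 0" and y: "orient a b y < 0" by simp_all
  have "u * orient a b x + v * orient a b y < 0"
  proof (cases "u = 0")
    case False
    then have "u * orient a b x < 0" using x uv by (simp add: mult_pos_neg)
    moreover have "v * orient a b y \<le> 0" using y uv by (simp add: mult_nonneg_nonpos)
    ultimately show ?thesis by linarith
  qed (use y uv in simp)
  then show "u *\<^sub>R x + v *\<^sub>R y \<in> {q. orient a b q < 0}"
    using orient_convex_combination[OF uv(3)] by simp
qed

lemma convex_orient_nonneg: "convex {q. 0 \<le> orient a b q}"
proof (rule convexI)
  fix x y and u v :: real
  assume "x \<in> {q. 0 \<le> orient a b q}" "y \<in> {q. 0 \<le> orient a b q}" "0 \<le> u" "0 \<le> v" "u + v = 1"
  then show "u *\<^sub>R x + v *\<^sub>R y \<in> {q. 0 \<le> orient a b q}"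
    using orient_convex_combination[OF \<open>u + v = 1\<close>] by simp
qed

lemma convex_hulls_disjoint_by_orient:
  assumes "\<forall>q\<in>Y. orient a b q < 0" "\<forall>q\<in>X. 0 \<le> orient a b q"
  shows "convex hull X \<inter> convex hull Y = {}"
proof -
  have "convex hull Y \<subseteq> {q. orient a b q < 0}"
    using assms(1) by (intro hull_minimal convex_orient_neg) auto
  moreover have "convex hull X \<subseteq> {q. 0 \<le> orient a b q}"
    using assms(2) by (intro hull_minimal convex_orient_nonneg) auto
  ultimately show ?thesis by fastforce
qed

lemma segments_intersect_by_orient:
  assumes "orient b1 b2 a1 > 0" "orient b1 b2 a2 < 0" "orient a1 a2 b1 < 0" "orient a1 a2 b2 > 0"
  shows "convex hull {a1, a2} \<inter> convex hull {b1, b2} \<noteq> {}"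
proof -
  define d1 d2 e1 e2 where "d1 = orient b1 b2 a1" "d2 = orient b1 b2 a2"
    "e1 = orient a1 a2 b1" "e2 = orient a1 a2 b2"
  define D where "D = d1 - d2"
  have D: "D > 0" using assms unfolding D_def d1_d2_e1_e2_def by simp
  have "e2 - e1 = D" unfolding D_def d1_d2_e1_e2_def orient_def by algebra
  have cramer: "d1 *\<^sub>R a2 - d2 *\<^sub>R a1 = e2 *\<^sub>R b1 - e1 *\<^sub>R b2"
    unfolding vec_eq_iff forall_2 d1_d2_e1_e2_def orient_def by simp algebra
  define p where "p = (d1 / D) *\<^sub>R a2 + (- d2 / D) *\<^sub>R a1"
  have "p \<in> convex hull {a1, a2}"
    unfolding convex_hull_2 p_def using D assms \<open>D = d1 - d2\<close>
    by (intro CollectI exI[of _ "- d2 / D"] exI[of _ "d1 / D"])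
      (auto simp: d1_d2_e1_e2_def[symmetric] divide_simps)
  moreover have "p = (e2 / D) *\<^sub>R b1 + (- e1 / D) *\<^sub>R b2"
  proof -
    have "p = (1 / D) *\<^sub>R (d1 *\<^sub>R a2 - d2 *\<^sub>R a1)" unfolding p_def by (simp add: algebra_simps)
    also have "\<dots> = (1 / D) *\<^sub>R (e2 *\<^sub>R b1 - e1 *\<^sub>R b2)" using cramer by simp
    finally show ?thesis by (simp add: algebra_simps)
  qed
  then have "p \<in> convex hull {b1, b2}"
    unfolding convex_hull_2 using D assms \<open>e2 - e1 = D\<close>
    by (intro CollectI exI[of _ "e2 / D"] exI[of _ "- e1 / D"])
      (auto simp: d1_d2_e1_e2_def[symmetric] divide_simps)
  ultimately show ?thesis by blast
qed

lemma sin_double_sum_identity: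
  "sin (2 * x) + sin (2 * y) - sin (2 * (x + y)) = 4 * sin x * sin y * sin (x + y :: real)"
proof -
  have "sin x ^ 2 + cos x ^ 2 = 1" "sin y ^ 2 + cos y ^ 2 = 1" by simp_all
  then have "2 * sin x * cos x + 2 * sin y * cos y
      - 2 * (sin x * cos y + cos x * sin y) * (cos x * cos y - sin x * sin y)
      = 4 * sin x * sin y * (sin x * cos y + cos x * sin y)"
    by algebra
  then show ?thesis by (simp only: sin_double sin_add cos_add)
qed

lemma orient_on_circle:
  assumes "a$1 = c1 + r * cos \<alpha>" "a$2 = c2 + r * sin \<alpha>"
    "b$1 = c1 + r * cos \<beta>" "b$2 = c2 + r * sin \<beta>"
    "q$1 = c1 + r * cos \<gamma>" "q$2 = c2 + r * sin \<gamma>"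
  shows "orient a b q = 4 * r\<^sup>2 * sin ((\<beta> - \<alpha>) / 2) * sin ((\<gamma> - \<beta>) / 2) * sin ((\<gamma> - \<alpha>) / 2)"
proof -
  have halves: "2 * ((\<beta> - \<alpha>) / 2) = \<beta> - \<alpha>" "2 * ((\<gamma> - \<beta>) / 2) = \<gamma> - \<beta>"
    "2 * ((\<beta> - \<alpha>) / 2 + (\<gamma> - \<beta>) / 2) = \<gamma> - \<alpha>"
    "(\<beta> - \<alpha>) / 2 + (\<gamma> - \<beta>) / 2 = (\<gamma> - \<alpha>) / 2"
    "2 * ((\<gamma> - \<alpha>) / 2) = \<gamma> - \<alpha>"
    by (simp_all add: field_simps)
  have "orient a b q = r\<^sup>2 * (sin (\<beta> - \<alpha>) + sin (\<gamma> - \<beta>) - sin (\<gamma> - \<alpha>))"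
    unfolding orient_def assms by (simp add: sin_diff power2_eq_square algebra_simps)
  also have "sin (\<beta> - \<alpha>) + sin (\<gamma> - \<beta>) - sin (\<gamma> - \<alpha>)
      = 4 * sin ((\<beta> - \<alpha>) / 2) * sin ((\<gamma> - \<beta>) / 2) * sin ((\<gamma> - \<alpha>) / 2)"
    using sin_double_sum_identity[of "(\<beta> - \<alpha>) / 2" "(\<gamma> - \<beta>) / 2"]
    unfolding halves(1-3) halves(4,5) .
  finally show ?thesis by simp
qed

section \<open>Angular coordinates on a circle\<close>

text \<open>Within a window of angles of width less than \<open>2 * pi\<close>, the cyclic order of points on
  the circle is the order of their angles.\<close>
definition angle_coord :: "real^2 \<Rightarrow> real \<Rightarrow> (real^2 \<Rightarrow> real) \<Rightarrow> bool" where
  "angle_coord c r \<theta> \<longleftrightarrow>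
     (\<forall>p\<in>sphere c r. p$1 = c$1 + r * cos (\<theta> p) \<and> p$2 = c$2 + r * sin (\<theta> p)) \<and>
     (\<forall>p\<in>sphere c r. \<forall>q\<in>sphere c r. \<theta> p - \<theta> q < 2 * pi)"

lemma angle_coordD:
  "angle_coord c r \<theta> \<Longrightarrow> p \<in> sphere c r \<Longrightarrow> p$1 = c$1 + r * cos (\<theta> p) \<and> p$2 = c$2 + r * sin (\<theta> p)"
  unfolding angle_coord_def by blast

lemma angle_coord_inj:
  "angle_coord c r \<theta> \<Longrightarrow> p \<in> sphere c r \<Longrightarrow> q \<in> sphere c r \<Longrightarrow> \<theta> p = \<theta> q
    \<Longrightarrow> p = q"
  using angle_coordD[of c r \<theta> p] angle_coordD[of c r \<theta> q] unfolding vec_eq_iff forall_2 by simp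

lemma orient_pos_by_angle:
  assumes "angle_coord c r \<theta>" "r > 0" "p \<in> sphere c r" "q \<in> sphere c r" "s \<in> sphere c r"
    and "\<theta> p < \<theta> q" "\<theta> q < \<theta> s"
  shows "orient p q s > 0"
proof -
  have "\<theta> s - \<theta> p < 2 * pi" using assms(1,3,5) unfolding angle_coord_def by blast
  then have "sin ((\<theta> q - \<theta> p) / 2) > 0" "sin ((\<theta> s - \<theta> q) / 2) > 0" "sin ((\<theta> s - \<theta> p) / 2) > 0"
    using assms(6,7) by (auto intro!: sin_gt_zero)
  then show ?thesis
    using orient_on_circle[of p "c$1" r "\<theta> p" "c$2" q "\<theta> q" s "\<theta> s"] angle_coordD[OF assms(1)] assms(2-5)
    by simp
qed

lemma orient_neg_inside_arc:
  assumes "angle_coord c r \<theta>" "r > 0" "p \<in> sphere c r" "p' \<in> sphere c r" "q \<in> sphere c r"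
    and "\<theta> p < \<theta> q" "\<theta> q < \<theta> p'"
  shows "orient p p' q < 0"
  using orient_pos_by_angle[OF assms(1-3,5,4,6,7)] orient_perm(4)[where a=p and b=q and q=p'] by simp

lemma orient_pos_outside_arc:
  assumes "angle_coord c r \<theta>" "r > 0" "p \<in> sphere c r" "p' \<in> sphere c r" "q \<in> sphere c r"
    and "\<theta> p < \<theta> p'" "\<theta> q < \<theta> p \<or> \<theta> p' < \<theta> q"
  shows "orient p p' q > 0"
  using assms(7)
proof
  assume "\<theta> q < \<theta> p"
  then show ?thesis
    using orient_pos_by_angle[OF assms(1,2,5,3,4) _ assms(6)] orient_perm(1)[where a=q and b=p and q=p'] by linarith
qed (use orient_pos_by_angle[OF assms(1-5,6)] in simp)

lemma chords_intersect_if_interleaved: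
  assumes "angle_coord c r \<theta>" "r > 0"
    and "p1 \<in> sphere c r" "q1 \<in> sphere c r" "p2 \<in> sphere c r" "q2 \<in> sphere c r"
    and "\<theta> p1 < \<theta> q1" "\<theta> q1 < \<theta> p2" "\<theta> p2 < \<theta> q2"
  shows "convex hull {p1, p2} \<inter> convex hull {q1, q2} \<noteq> {}"
proof (rule segments_intersect_by_orient)
  show "orient q1 q2 p1 > 0"
    using orient_pos_by_angle[OF assms(1-4,6)] assms(7-9) orient_perm(1)[where a=p1 and b=q1 and q=q2] by linarith
  show "orient q1 q2 p2 < 0"
    using orient_neg_inside_arc[OF assms(1,2,4,6,5)] assms(8,9) by simp
  show "orient p1 p2 q1 < 0"
    using orient_neg_inside_arc[OF assms(1,2,3,5,4)] assms(7,8) by simp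
  show "orient p1 p2 q2 > 0"
    using orient_pos_by_angle[OF assms(1,2,3,5,6)] assms(7-9) by simp
qed

definition circle_angle :: "real^2 \<Rightarrow> real^2 \<Rightarrow> real" where
  "circle_angle c p = Arg (Complex (p$1 - c$1) (p$2 - c$2))"

lemma circle_angle_bounds: "- pi < circle_angle c p \<and> circle_angle c p \<le> pi"
  unfolding circle_angle_def by (rule Arg_bounded)

lemma circle_angle_polar:
  assumes "p \<in> sphere c r"
  shows "p$1 = c$1 + r * cos (circle_angle c p) \<and> p$2 = c$2 + r * sin (circle_angle c p)"
proof -
  define z where "z = Complex (p$1 - c$1) (p$2 - c$2)"
  have "norm (p - c) = r" using assms by (simp add: dist_norm norm_minus_commute)
  then have "sqrt ((p$1 - c$1)\<^sup>2 + (p$2 - c$2)\<^sup>2) = r"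
    by (simp add: norm_eq_sqrt_inner inner_vec_def sum_2 power2_eq_square)
  then have "cmod z = r" unfolding z_def complex_norm by simp
  moreover have "Re z = Re (rcis (cmod z) (Arg z))" "Im z = Im (rcis (cmod z) (Arg z))"
    by (simp_all only: rcis_cmod_Arg)
  ultimately show ?thesis unfolding circle_angle_def z_def[symmetric] by (simp add: z_def)
qed

text \<open>Moving the cut of the angular coordinate from \<open>-pi\<close> to \<open>t\<close>.\<close>
definition unwrap :: "real \<Rightarrow> real \<Rightarrow> real" where
  "unwrap t x = (if x < t then x + 2 * pi else x)"

lemma angle_coord_circle_angle: "angle_coord c r (circle_angle c)"
  unfolding angle_coord_def using circle_angle_polar circle_angle_bounds
  by (smt (verit) pi_gt_zero)

lemma angle_coord_unwrap: "angle_coord c r (unwrap t \<circ> circle_angle c)"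
proof -
  have "unwrap t (circle_angle c p) - unwrap t (circle_angle c q) < 2 * pi" for p q
    using circle_angle_bounds[of c p] circle_angle_bounds[of c q] unfolding unwrap_def by auto
  moreover have "p$1 = c$1 + r * cos (unwrap t (circle_angle c p))
      \<and> p$2 = c$2 + r * sin (unwrap t (circle_angle c p))" if "p \<in> sphere c r" for p
    using circle_angle_polar[OF that] unfolding unwrap_def by (simp add: sin_periodic cos_periodic)
  ultimately show ?thesis unfolding angle_coord_def by simp
qed

section \<open>Unlinked sets of angles\<close>

definition strictly_between :: "real \<Rightarrow> real \<Rightarrow> real \<Rightarrow> bool" where
  "strictly_between u v z \<longleftrightarrow> u < z \<and> z < v \<or> v < z \<and> z < u"

definition same_side :: "real set \<Rightarrow> real \<Rightarrow> real \<Rightarrow> bool" where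
  "same_side Z u v \<longleftrightarrow> (\<forall>z\<in>Z. \<forall>z'\<in>Z. strictly_between u v z \<longrightarrow> strictly_between u v z')"

text \<open>Read as sets of points on a circle, \<open>X\<close> and \<open>Z\<close> are unlinked if no chord between two
  points of \<open>X\<close> separates two points of \<open>Z\<close>, i.e. the two sets do not interleave. This does
  not depend on where the circle is cut open into an interval of angles.\<close>
definition unlinked :: "real set \<Rightarrow> real set \<Rightarrow> bool" where
  "unlinked Z X \<longleftrightarrow> Z \<inter> X = {} \<and> (\<forall>u\<in>X. \<forall>v\<in>X. same_side Z u v)"

lemma unlinkedD:
  "unlinked Z X \<Longrightarrow> u \<in> X \<Longrightarrow> v \<in> X \<Longrightarrow> z \<in> Z \<Longrightarrow> z' \<in> Z
    \<Longrightarrow> strictly_between u v z \<longleftrightarrow> strictly_between u v z'"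
  unfolding unlinked_def same_side_def by blast

lemma unlinked_distinct: "unlinked Z X \<Longrightarrow> u \<in> X \<Longrightarrow> z \<in> Z \<Longrightarrow> u \<noteq> z"
  unfolding unlinked_def by blast

lemma same_side_sym: "same_side Z u v = same_side Z v u"
  unfolding same_side_def strictly_between_def by blast

lemma same_side_refl: "same_side Z u u"
  unfolding same_side_def strictly_between_def by auto

lemma same_side_trans:
  assumes "same_side Z u v" "same_side Z v w" "u \<notin> Z" "v \<notin> Z" "w \<notin> Z"
  shows "same_side Z u w"
  unfolding same_side_def
proof (intro ballI impI)
  fix z z' assume z: "z \<in> Z" "z' \<in> Z" "strictly_between u w z"
  have "strictly_between u v z \<longleftrightarrow> strictly_between u v z'" "strictly_between v w z \<longleftrightarrow> strictly_between v w z'"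
    using assms(1,2) z(1,2) unfolding same_side_def by blast+
  moreover have "z \<noteq> u" "z \<noteq> v" "z \<noteq> w" "z' \<noteq> u" "z' \<noteq> v" "z' \<noteq> w"
    using assms(3-5) z by auto
  ultimately show "strictly_between u w z'" using z(3) unfolding strictly_between_def by (smt (verit))
qed

lemma unlinked_sym: "unlinked Z X \<Longrightarrow> unlinked X Z"
  unfolding unlinked_def same_side_def
proof (intro conjI ballI impI)
  assume u: "Z \<inter> X = {} \<and>
    (\<forall>u\<in>X. \<forall>v\<in>X. \<forall>z\<in>Z. \<forall>z'\<in>Z. strictly_between u v z \<longrightarrow> strictly_between u v z')"
  then show "X \<inter> Z = {}" by blast
  fix z z' x x' assume "z \<in> Z" "z' \<in> Z" "x \<in> X" "x' \<in> X" "strictly_between z z' x"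
  moreover have "strictly_between x x' z \<longleftrightarrow> strictly_between x x' z'" "x \<noteq> z" "x \<noteq> z'" "x' \<noteq> z" "x' \<noteq> z'"
    using u calculation by blast+
  ultimately show "strictly_between z z' x'" unfolding strictly_between_def by linarith
qed

lemma unlinked_mono: "unlinked Z X \<Longrightarrow> Z' \<subseteq> Z \<Longrightarrow> X' \<subseteq> X \<Longrightarrow> unlinked Z' X'"
  unfolding unlinked_def same_side_def by blast

lemma linked_mono: "\<not> unlinked Z X \<Longrightarrow> Z \<subseteq> Z' \<Longrightarrow> X \<subseteq> X' \<Longrightarrow> \<not> unlinked Z' X'"
  using unlinked_mono by blast

lemma unlinked_if_less: "\<forall>x\<in>X. \<forall>y\<in>Y. x < y \<Longrightarrow> unlinked X Y"
  unfolding unlinked_def same_side_def strictly_between_def by force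

text \<open>If \<open>x \<in> X1\<close> lies inside and \<open>x' \<in> X1\<close> outside a chord \<open>u v\<close> of \<open>X2\<close>, then \<open>Z\<close>
  does not separate \<open>x'\<close> from the nearer end of that chord.\<close>
lemma linked_same_side_pair:
  assumes "unlinked Z X1" "unlinked Z X2" "\<not> unlinked X1 X2"
  shows "\<exists>a\<in>X1. \<exists>b\<in>X2. same_side Z a b"
proof (cases "X1 \<inter> X2 = {}")
  case True
  then obtain u v x x' where uv: "u \<in> X2" "v \<in> X2" "x \<in> X1" "x' \<in> X1"
    and "strictly_between u v x" "\<not> strictly_between u v x'"
    using assms(3) unfolding unlinked_def same_side_def by blast
  define w where "w = (if x' < u then min u v else max u v)"
  have "same_side Z x' w" unfolding same_side_def
  proof (intro ballI impI)
    fix z z' assume z: "z \<in> Z" "z' \<in> Z" "strictly_between x' w z"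
    have "strictly_between x' x z \<longleftrightarrow> strictly_between x' x z'" "strictly_between u v z \<longleftrightarrow> strictly_between u v z'"
      using unlinkedD[OF assms(1)] unlinkedD[OF assms(2)] z uv by blast+
    moreover have "z \<noteq> u" "z \<noteq> v" "z \<noteq> x" "z' \<noteq> u" "z' \<noteq> v" "z' \<noteq> x" "z \<noteq> x'" "z' \<noteq> x'"
      "x' \<noteq> u" "x' \<noteq> v"
      using unlinked_distinct[OF assms(1)] unlinked_distinct[OF assms(2)] True z uv by blast+
    ultimately show "strictly_between x' w z'"
      using z(3) \<open>strictly_between u v x\<close> \<open>\<not> strictly_between u v x'\<close> unfolding strictly_between_def w_def min_def max_def
      by (smt (verit))
  qed
  moreover have "w \<in> X2" unfolding w_def min_def max_def using uv by simp
  ultimately show ?thesis using uv by blast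
qed (use same_side_refl in blast)

lemma unlinked_Un:
  assumes "unlinked Z X1" "unlinked Z X2" "\<not> unlinked X1 X2"
  shows "unlinked Z (X1 \<union> X2)"
proof -
  have out: "x \<notin> Z" if "x \<in> X1 \<union> X2" for x
    using that unlinked_distinct[OF assms(1)] unlinked_distinct[OF assms(2)] by blast
  obtain a b where ab: "a \<in> X1" "b \<in> X2" "same_side Z a b"
    using linked_same_side_pair[OF assms] by blast
  have to_a: "same_side Z u a" if u: "u \<in> X1 \<union> X2" for u
  proof (cases "u \<in> X1")
    case True
    then show ?thesis using assms(1) ab(1) unfolding unlinked_def by blast
  next
    case False
    then have "same_side Z u b" using u assms(2) ab(2) unfolding unlinked_def by blast
    moreover have "same_side Z b a" using ab(3) same_side_sym by blast
    ultimately show ?thesis using same_side_trans out u ab(1,2) by blast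
  qed
  have "same_side Z u v" if "u \<in> X1 \<union> X2" "v \<in> X1 \<union> X2" for u v
  proof -
    have "same_side Z a v" using to_a[OF that(2)] same_side_sym by blast
    then show ?thesis using same_side_trans[OF to_a[OF that(1)]] out that ab(1) by blast
  qed
  then show ?thesis unfolding unlinked_def using out by blast
qed

lemma unlinked_Un_star:
  assumes "unlinked Z Y0" "unlinked Z Y1" "unlinked Z Y2" "unlinked Z Y3"
    and "\<not> unlinked Y0 Y1" "\<not> unlinked Y0 Y2" "\<not> unlinked Y0 Y3"
  shows "unlinked Z (Y0 \<union> Y1 \<union> Y2 \<union> Y3)"
proof -
  have "unlinked Z (Y0 \<union> Y1)" using unlinked_Un[OF assms(1,2,5)] .
  moreover have "\<not> unlinked (Y0 \<union> Y1) Y2" using linked_mono[OF assms(6), of "Y0 \<union> Y1" Y2] by simp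
  ultimately have "unlinked Z (Y0 \<union> Y1 \<union> Y2)" using unlinked_Un[OF _ assms(3)] by simp
  moreover have "\<not> unlinked (Y0 \<union> Y1 \<union> Y2) Y3" using linked_mono[OF assms(7), of "Y0 \<union> Y1 \<union> Y2" Y3] by blast
  ultimately show ?thesis using unlinked_Un[OF _ assms(4)] by simp
qed

lemma unlinked_UN_chain:
  assumes "successively (\<lambda>x y. \<not> unlinked (S x) (S y)) xs" "xs \<noteq> []" "\<forall>x\<in>set xs. unlinked Z (S x)"
  shows "unlinked Z (\<Union>x\<in>set xs. S x)"
  using assms
proof (induction xs)
  case (Cons x xs)
  show ?case
  proof (cases "xs = []")
    case False
    then have chain: "successively (\<lambda>x y. \<not> unlinked (S x) (S y)) xs" "\<not> unlinked (S x) (S (hd xs))"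
      using Cons.prems(1) by (simp_all add: successively_Cons)
    have "\<not> unlinked (S x) (\<Union>y\<in>set xs. S y)"
      using linked_mono[OF chain(2) order_refl, of "\<Union>y\<in>set xs. S y"] False by (simp add: SUP_upper)
    moreover have "unlinked Z (\<Union>y\<in>set xs. S y)" using Cons.IH chain(1) False Cons.prems(3) by simp
    ultimately show ?thesis using unlinked_Un[of Z "S x"] Cons.prems(3) by simp
  qed (use Cons.prems in simp)
qed simp

lemma linked_point_in_range:
  assumes "finite B" "B \<noteq> {}" "\<not> unlinked B X"
  shows "\<exists>x\<in>X. Min B \<le> x \<and> x \<le> Max B"
proof (cases "B \<inter> X = {}")
  case False
  then show ?thesis using assms(1) Min_le Max_ge by blast
next
  case True
  then obtain u v z z' where uv: "u \<in> X" "v \<in> X" "z \<in> B" "z' \<in> B"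
    and btw: "strictly_between u v z" "\<not> strictly_between u v z'"
    using assms(3) unfolding unlinked_def same_side_def by blast
  have "Min B \<le> z" "z \<le> Max B" "Min B \<le> z'" "z' \<le> Max B" "z' \<noteq> u" "z' \<noteq> v"
    using uv assms(1) True by auto
  then have "Min B \<le> u \<and> u \<le> Max B \<or> Min B \<le> v \<and> v \<le> Max B"
    using btw unfolding strictly_between_def by linarith
  then show ?thesis using uv by blast
qed

lemma unlinked_outside_range:
  assumes "unlinked C S" "finite C" "C \<noteq> {}" "b \<in> S" "b < Min C \<or> Max C < b" "s \<in> S"
  shows "s < Min C \<or> Max C < s"
proof (rule ccontr)
  assume "\<not> (s < Min C \<or> Max C < s)"
  moreover have "Min C \<in> C" "Max C \<in> C" using assms by auto
  moreover have "s \<noteq> Min C" "s \<noteq> Max C" using calculation(2,3) unlinked_distinct[OF assms(1,6)] by auto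
  moreover have "Min C \<le> Max C" using assms(2,3) by simp
  ultimately have "strictly_between b s (Min C) \<noteq> strictly_between b s (Max C)"
    using assms(5) unfolding strictly_between_def by auto
  then show False using unlinkedD[OF assms(1,4,6)] \<open>Min C \<in> C\<close> \<open>Max C \<in> C\<close> by blast
qed

lemma unlinked_in_gap:
  assumes "unlinked X Z" "finite X" "a \<in> X" "b \<in> X" "z0 \<in> Z" "a < z0" "z0 < b"
  shows "\<exists>a'\<in>X. \<exists>b'\<in>X. a' < b' \<and> (\<forall>z\<in>Z. a' < z \<and> z < b') \<and> (\<forall>x\<in>X. x \<le> a' \<or> b' \<le> x)"
proof -
  define a' b' where "a' = Max {x\<in>X. x < z0}" "b' = Min {x\<in>X. z0 < x}"
  have fin: "finite {x\<in>X. x < z0}" "finite {x\<in>X. z0 < x}" using assms(2) by simp_all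
  have a': "a' \<in> X" "a' < z0" using Max_in[OF fin(1)] assms(3,6) unfolding a'_b'_def by auto
  have b': "b' \<in> X" "z0 < b'" using Min_in[OF fin(2)] assms(4,7) unfolding a'_b'_def by auto
  have gap: "x \<le> a' \<or> b' \<le> x" if "x \<in> X" for x
  proof (cases "x < z0")
    case True
    then show ?thesis using Max_ge[OF fin(1)] that unfolding a'_b'_def by simp
  next
    case False
    then have "z0 < x" using unlinked_distinct[OF assms(1) assms(5) that] by simp
    then show ?thesis using Min_le[OF fin(2)] that unfolding a'_b'_def by simp
  qed
  have inside: "a' < z \<and> z < b'" if "z \<in> Z" for z
  proof -
    have "strictly_between z0 z a' \<longleftrightarrow> strictly_between z0 z b'"
      using unlinkedD[OF assms(1) assms(5) that a'(1) b'(1)] .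
    moreover have "z \<noteq> a'" "z \<noteq> b'" using unlinked_distinct[OF assms(1) that] a'(1) b'(1) by simp_all
    ultimately show ?thesis using a'(2) b'(2) unfolding strictly_between_def by linarith
  qed
  have "a' < b'" using a'(2) b'(2) by simp
  then show ?thesis using a'(1) b'(1) gap inside by blast
qed

section \<open>Theta configurations of unlinked sets\<close>

lemma unlinked_nested_if_avoids:
  assumes "unlinked X Y" "xb \<in> X" "xc \<in> X" "yb \<in> Y" "yc \<in> Y"
    "b1 \<le> xb" "xb \<le> b2" "b1 \<le> yb" "yb \<le> b2" "c1 \<le> xc" "xc \<le> c2" "c1 \<le> yc" "yc \<le> c2" "b2 < c1"
    and avoid: "X \<inter> {yb<..<yc} = {}"
  shows "X \<inter> {b2<..<c1} = {} \<and> Y \<subseteq> {b1<..<c2}"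
proof
  show "X \<inter> {b2<..<c1} = {}" using avoid assms(9,12) by auto
  have "xb \<noteq> yb" "xc \<noteq> yc" using unlinked_distinct[OF assms(1)] assms(2-5) by auto
  moreover have "xb \<notin> {yb<..<yc}" "xc \<notin> {yb<..<yc}" using avoid assms(2,3) by auto
  ultimately have xb: "xb < yb" and xc: "yc < xc" using assms(6-14) by auto
  show "Y \<subseteq> {b1<..<c2}"
  proof
    fix y assume y: "y \<in> Y"
    have "y \<noteq> xb" "y \<noteq> xc" using unlinked_distinct[OF assms(1) y] assms(2,3) by auto
    moreover have "strictly_between yb y xc \<longrightarrow> strictly_between yb y xb"
      "strictly_between y yc xb \<longrightarrow> strictly_between y yc xc"
      using unlinkedD[OF assms(1) assms(4) y assms(3,2)] unlinkedD[OF assms(1) y assms(5) assms(2,3)]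
      by blast+
    ultimately have "b1 < y \<and> y < c2"
      using xb xc assms(6-14) unfolding strictly_between_def by linarith
    then show "y \<in> {b1<..<c2}" by simp
  qed
qed

lemma unlinked_nested:
  assumes "unlinked X Y" "xb \<in> X" "xc \<in> X" "yb \<in> Y" "yc \<in> Y"
    "b1 \<le> xb" "xb \<le> b2" "b1 \<le> yb" "yb \<le> b2" "c1 \<le> xc" "xc \<le> c2" "c1 \<le> yc" "yc \<le> c2" "b2 < c1"
  shows "X \<inter> {b2<..<c1} = {} \<and> Y \<subseteq> {b1<..<c2} \<or> Y \<inter> {b2<..<c1} = {} \<and> X \<subseteq> {b1<..<c2}"
proof (cases "X \<inter> {yb<..<yc} = {}")
  case True
  then show ?thesis using unlinked_nested_if_avoids[OF assms] by blast
next
  case False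
  then obtain x where x: "x \<in> X" "yb < x" "x < yc" by auto
  have "strictly_between yb yc x'" if "x' \<in> X" for x'
    using unlinkedD[OF assms(1) assms(4,5) x(1) that] x unfolding strictly_between_def by blast
  from this[OF assms(2)] this[OF assms(3)] have "yb < xb" "xc < yc"
    using assms(6-14) unfolding strictly_between_def by linarith+
  then have "Y \<inter> {xb<..<xc} = {}"
    using unlinkedD[OF unlinked_sym[OF assms(1)] assms(2,3,4)] assms(6-14)
    unfolding strictly_between_def by fastforce
  then show ?thesis
    using unlinked_nested_if_avoids[OF unlinked_sym[OF assms(1)] assms(4,5,2,3) assms(8,9,6,7,12,13,10,11,14)]
    by blast
qed

lemma unlinked_if_confined:
  assumes "(X1 \<union> X2) \<inter> {b2<..<c1} = {}" "X1 \<union> X2 \<subseteq> {b1<..<c2}"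
    and "\<forall>x\<in>X1. x < c1 \<or> c2 < x" "\<forall>x\<in>X2. b2 < x"
  shows "unlinked X1 X2"
proof (rule unlinked_if_less, intro ballI)
  fix x y assume "x \<in> X1" "y \<in> X2"
  then have "x \<le> b2" "c1 \<le> y" using assms by fastforce+
  moreover have "b2 < y" using assms(4) \<open>y \<in> X2\<close> by blast
  ultimately show "x < y" by linarith
qed

text \<open>Each arm meets both the range of \<open>B\<close> and the range of \<open>C\<close>, so any two arms are nested:
  one avoids the gap between the ranges, the other stays inside their hull. Among three arms
  one is nested both ways, and then its two halves are unlinked.\<close>
lemma no_unlinked_theta_on_line:
  fixes B C L1 L2 M1 M2 R1 R2 :: "real set"
  assumes fin: "finite B" "finite C" "B \<noteq> {}" "C \<noteq> {}"
    and first: "\<forall>b\<in>B. \<forall>x\<in>C \<union> L2 \<union> M2 \<union> R2. b < x"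
    and C_unlinked: "unlinked C (B \<union> L1 \<union> M1 \<union> R1)"
    and linked: "\<not> unlinked B L1" "\<not> unlinked B M1" "\<not> unlinked B R1"
      "\<not> unlinked C L2" "\<not> unlinked C M2" "\<not> unlinked C R2"
      "\<not> unlinked L1 L2" "\<not> unlinked M1 M2" "\<not> unlinked R1 R2"
    and arms: "unlinked (L1 \<union> L2) (M1 \<union> M2)" "unlinked (L1 \<union> L2) (R1 \<union> R2)"
      "unlinked (M1 \<union> M2) (R1 \<union> R2)"
  shows False
proof -
  define b1 b2 c1 c2 where "b1 = Min B" "b2 = Max B" "c1 = Min C" "c2 = Max C"
  have "b1 \<in> B" "b2 \<in> B" "c1 \<in> C" using fin unfolding b1_b2_c1_c2_def by auto
  then have "b2 < c1" "b1 < c1" using first by blast+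
  have "x < c1 \<or> c2 < x" if "x \<in> B \<union> L1 \<union> M1 \<union> R1" for x
    using unlinked_outside_range[OF C_unlinked fin(2,4) _ _ that, of b1] \<open>b1 \<in> B\<close> \<open>b1 < c1\<close>
    unfolding b1_b2_c1_c2_def by blast
  then have wrap: "\<forall>x\<in>X. x < c1 \<or> c2 < x" if "X \<subseteq> B \<union> L1 \<union> M1 \<union> R1" for X
    using that by blast
  have after: "\<forall>x\<in>X. b2 < x" if "X \<subseteq> C \<union> L2 \<union> M2 \<union> R2" for X
    using first \<open>b2 \<in> B\<close> that by blast
  have not_confined: "\<not> ((X1 \<union> X2) \<inter> {b2<..<c1} = {} \<and> X1 \<union> X2 \<subseteq> {b1<..<c2})"
    if "X1 \<subseteq> B \<union> L1 \<union> M1 \<union> R1" "X2 \<subseteq> C \<union> L2 \<union> M2 \<union> R2" "\<not> unlinked X1 X2" for X1 X2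
    using unlinked_if_confined[OF _ _ wrap[OF that(1)] after[OF that(2)]] that(3) by blast
  obtain lb mb rb where b: "lb \<in> L1" "mb \<in> M1" "rb \<in> R1"
    "b1 \<le> lb" "lb \<le> b2" "b1 \<le> mb" "mb \<le> b2" "b1 \<le> rb" "rb \<le> b2"
    using linked(1-3)[THEN linked_point_in_range[OF fin(1,3)]] unfolding b1_b2_c1_c2_def by blast
  obtain lc mc rc where c: "lc \<in> L2" "mc \<in> M2" "rc \<in> R2"
    "c1 \<le> lc" "lc \<le> c2" "c1 \<le> mc" "mc \<le> c2" "c1 \<le> rc" "rc \<le> c2"
    using linked(4-6)[THEN linked_point_in_range[OF fin(2,4)]] unfolding b1_b2_c1_c2_def by blast
  have "(L1 \<union> L2) \<inter> {b2<..<c1} = {} \<and> M1 \<union> M2 \<subseteq> {b1<..<c2}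
      \<or> (M1 \<union> M2) \<inter> {b2<..<c1} = {} \<and> L1 \<union> L2 \<subseteq> {b1<..<c2}"
    by (rule unlinked_nested[OF arms(1), of lb lc mb mc]) (use b c \<open>b2 < c1\<close> in auto)
  moreover have "(L1 \<union> L2) \<inter> {b2<..<c1} = {} \<and> R1 \<union> R2 \<subseteq> {b1<..<c2}
      \<or> (R1 \<union> R2) \<inter> {b2<..<c1} = {} \<and> L1 \<union> L2 \<subseteq> {b1<..<c2}"
    by (rule unlinked_nested[OF arms(2), of lb lc rb rc]) (use b c \<open>b2 < c1\<close> in auto)
  moreover have "(M1 \<union> M2) \<inter> {b2<..<c1} = {} \<and> R1 \<union> R2 \<subseteq> {b1<..<c2}
      \<or> (R1 \<union> R2) \<inter> {b2<..<c1} = {} \<and> M1 \<union> M2 \<subseteq> {b1<..<c2}"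
    by (rule unlinked_nested[OF arms(3), of mb mc rb rc]) (use b c \<open>b2 < c1\<close> in auto)
  moreover have "\<not> ((L1 \<union> L2) \<inter> {b2<..<c1} = {} \<and> L1 \<union> L2 \<subseteq> {b1<..<c2})"
    "\<not> ((M1 \<union> M2) \<inter> {b2<..<c1} = {} \<and> M1 \<union> M2 \<subseteq> {b1<..<c2})"
    "\<not> ((R1 \<union> R2) \<inter> {b2<..<c1} = {} \<and> R1 \<union> R2 \<subseteq> {b1<..<c2})"
    using not_confined linked(7-9) by blast+
  ultimately show False by argo
qed

lemma unwrap_separates:
  assumes "finite Z" "Z \<noteq> {}" "X \<noteq> {}" "unlinked Z X" "\<forall>x\<in>Z \<union> X. - pi < x \<and> x \<le> pi"
  shows "\<exists>t. \<forall>z\<in>Z. \<forall>x\<in>X. unwrap t z < unwrap t x"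
proof -
  obtain x0 where x0: "x0 \<in> X" using assms(3) by blast
  have ne: "z \<noteq> x" if "z \<in> Z" "x \<in> X" for z x using unlinked_distinct[OF assms(4) that(2,1)] by auto
  have bnd: "- pi < x \<and> x \<le> pi" if "x \<in> Z \<union> X" for x using assms(5) that by blast
  show ?thesis
  proof (cases "\<exists>z\<in>Z. x0 < z")
    case True
    define t where "t = Min {z\<in>Z. x0 < z}"
    have fin: "finite {z\<in>Z. x0 < z}" using assms(1) by simp
    have t: "t \<in> Z" "x0 < t" using Min_in[OF fin] True unfolding t_def by auto
    have "unwrap t z < unwrap t x" if zx: "z \<in> Z" "x \<in> X" for z x
    proof -
      have "\<not> (x0 < z \<and> z < t)" using Min_le[OF fin] zx(1) unfolding t_def by force
      moreover have "strictly_between x x0 z \<longleftrightarrow> strictly_between x x0 t"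
        using unlinkedD[OF assms(4) zx(2) x0 zx(1) t(1)] .
      moreover have "z \<noteq> x" "z \<noteq> x0" "t \<noteq> x" using ne zx x0 t by auto
      moreover have "- pi < z" "z \<le> pi" "- pi < x" "x \<le> pi" using bnd zx by auto
      ultimately show ?thesis
        using t(2) unfolding unwrap_def strictly_between_def by (smt (verit))
    qed
    then show ?thesis by blast
  next
    case False
    define t where "t = Min Z"
    have t: "t \<in> Z" "\<forall>z\<in>Z. t \<le> z" using assms(1,2) unfolding t_def by auto
    have "unwrap t z < unwrap t x" if zx: "z \<in> Z" "x \<in> X" for z x
    proof -
      have "strictly_between x x0 z \<longleftrightarrow> strictly_between x x0 t"
        using unlinkedD[OF assms(4) zx(2) x0 zx(1) t(1)] .
      moreover have "z \<noteq> x" "z \<noteq> x0" "t \<noteq> x" "z \<le> x0" "t \<le> z" using ne zx x0 t False by auto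
      moreover have "- pi < z" "z \<le> pi" "- pi < x" "x \<le> pi" using bnd zx by auto
      ultimately show ?thesis unfolding unwrap_def strictly_between_def by (smt (verit) pi_gt_zero)
    qed
    then show ?thesis by blast
  qed
qed

section \<open>Disjoint polygons on a circle\<close>

lemma convex_hulls_meet_if_interleaved:
  assumes "angle_coord c r \<theta>" "r > 0" "X \<subseteq> sphere c r" "Y \<subseteq> sphere c r"
    and "p1 \<in> X" "p2 \<in> X" "q1 \<in> Y" "q2 \<in> Y" "\<theta> p1 < \<theta> q1" "\<theta> q1 < \<theta> p2" "\<theta> p2 < \<theta> q2"
  shows "convex hull X \<inter> convex hull Y \<noteq> {}"
proof -
  have "convex hull {p1, p2} \<inter> convex hull {q1, q2} \<noteq> {}"
    using assms by (intro chords_intersect_if_interleaved[OF assms(1,2)]) auto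
  moreover have "convex hull {p1, p2} \<subseteq> convex hull X" "convex hull {q1, q2} \<subseteq> convex hull Y"
    using assms(5-8) by (simp_all add: hull_mono)
  ultimately show ?thesis by blast
qed

lemma unlinked_if_convex_hulls_disjoint:
  assumes "angle_coord c r \<theta>" "r > 0" "X \<subseteq> sphere c r" "Y \<subseteq> sphere c r"
    and "convex hull X \<inter> convex hull Y = {}"
  shows "unlinked (\<theta> ` X) (\<theta> ` Y)"
proof (rule ccontr)
  assume linked: "\<not> unlinked (\<theta> ` X) (\<theta> ` Y)"
  have "\<theta> ` X \<inter> \<theta> ` Y = {}"
  proof (rule ccontr)
    assume "\<theta> ` X \<inter> \<theta> ` Y \<noteq> {}"
    then obtain p q where "p \<in> X" "q \<in> Y" "\<theta> p = \<theta> q" by auto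
    then have "p \<in> X \<inter> Y" using angle_coord_inj[OF assms(1)] assms(3,4) by blast
    then show False using assms(5) hull_subset[of X convex] hull_subset[of Y convex] by blast
  qed
  then obtain u v z z' where "u \<in> Y" "v \<in> Y" "z \<in> X" "z' \<in> X"
    and "strictly_between (\<theta> u) (\<theta> v) (\<theta> z)" "\<not> strictly_between (\<theta> u) (\<theta> v) (\<theta> z')"
    using linked unfolding unlinked_def same_side_def by blast
  moreover have "\<theta> z' \<noteq> \<theta> u" "\<theta> z' \<noteq> \<theta> v"
    using \<open>\<theta> ` X \<inter> \<theta> ` Y = {}\<close> calculation(1-4) by blast+
  ultimately obtain u' v' where "u' \<in> Y" "v' \<in> Y" "\<theta> u' < \<theta> z" "\<theta> z < \<theta> v'"
    "\<theta> z' < \<theta> u' \<or> \<theta> v' < \<theta> z'"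
    unfolding strictly_between_def by (metis linorder_neqE_linordered_idom)
  then show False
    using convex_hulls_meet_if_interleaved[OF assms(1-4) \<open>z' \<in> X\<close> \<open>z \<in> X\<close>, of u' v']
      convex_hulls_meet_if_interleaved[OF assms(1,2,4,3) \<open>u' \<in> Y\<close> \<open>v' \<in> Y\<close> \<open>z \<in> X\<close> \<open>z' \<in> X\<close>]
      assms(5) by auto
qed

lemma convex_hull_disjoint_sphere_point:
  fixes c :: "'a::real_inner"
  assumes "p \<in> sphere c r" "Y \<subseteq> sphere c r" "p \<notin> Y"
  shows "convex hull {p} \<inter> convex hull Y = {}"
proof -
  define H where "H = {x. inner (p - c) x < inner (p - c) p}"
  have "Y \<subseteq> H"
  proof
    fix q assume "q \<in> Y"
    then have "q \<in> sphere c r" "q \<noteq> p" using assms by auto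
    then have "norm (q - c) = r" "norm (p - c) = r" "0 < inner (q - p) (q - p)"
      using assms(1) by (simp_all add: dist_norm norm_minus_commute)
    then have "inner (q - c) (q - c) = r\<^sup>2" "inner (p - c) (p - c) = r\<^sup>2" "0 < inner (q - p) (q - p)"
      by (simp_all add: power2_norm_eq_inner[symmetric])
    moreover have "inner (q - p) (q - p)
        = inner (q - c) (q - c) - 2 * inner (p - c) (q - c) + inner (p - c) (p - c)"
      by (simp add: inner_diff_left inner_diff_right inner_commute)
    ultimately have "inner (p - c) (q - c) < inner (p - c) (p - c)" by linarith
    then show "q \<in> H" unfolding H_def by (simp add: inner_diff_right)
  qed
  then have "convex hull Y \<subseteq> H" by (rule hull_minimal) (simp add: H_def convex_halfspace_lt)
  moreover have "p \<notin> H" unfolding H_def by simp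
  ultimately show ?thesis by auto
qed

lemma convex_hulls_disjoint_inside_arc:
  assumes "angle_coord c r \<theta>" "r > 0" "X \<subseteq> sphere c r" "Y \<subseteq> sphere c r" "p \<in> X" "p' \<in> X"
    and "\<forall>q\<in>Y. \<theta> p < \<theta> q \<and> \<theta> q < \<theta> p'" "\<forall>q\<in>X. \<theta> q \<le> \<theta> p \<or> \<theta> p' \<le> \<theta> q"
    and "\<theta> p < \<theta> p'"
  shows "convex hull X \<inter> convex hull Y = {}"
proof (rule convex_hulls_disjoint_by_orient)
  have on_circle: "p \<in> sphere c r" "p' \<in> sphere c r" using assms(3,5,6) by auto
  show "\<forall>q\<in>Y. orient p p' q < 0"
    using orient_neg_inside_arc[OF assms(1,2) on_circle] assms(4,7) by blast
  show "\<forall>q\<in>X. 0 \<le> orient p p' q"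
  proof
    fix q assume "q \<in> X"
    then have q: "q \<in> sphere c r" "\<theta> q \<le> \<theta> p \<or> \<theta> p' \<le> \<theta> q" using assms(3,8) by auto
    consider "\<theta> q = \<theta> p" | "\<theta> q = \<theta> p'" | "\<theta> q < \<theta> p \<or> \<theta> p' < \<theta> q" using q(2) by linarith
    then show "0 \<le> orient p p' q"
    proof cases
      case 1
      then show ?thesis using angle_coord_inj[OF assms(1) q(1) on_circle(1)] orient_self by simp
    next
      case 2
      then show ?thesis using angle_coord_inj[OF assms(1) q(1) on_circle(2)] orient_self by simp
    next
      case 3
      then show ?thesis using orient_pos_outside_arc[OF assms(1,2) on_circle q(1) assms(9)] by simp
    qed
  qed
qed

lemma convex_hulls_disjoint_outside_arc:
  assumes "angle_coord c r \<theta>" "r > 0" "X \<subseteq> sphere c r" "Y \<subseteq> sphere c r" "p \<in> X" "p' \<in> X"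
    and "\<forall>q\<in>Y. \<theta> q < \<theta> p \<or> \<theta> p' < \<theta> q" "\<forall>q\<in>X. \<theta> p \<le> \<theta> q \<and> \<theta> q \<le> \<theta> p'"
    and "\<theta> p < \<theta> p'"
  shows "convex hull X \<inter> convex hull Y = {}"
proof (rule convex_hulls_disjoint_by_orient)
  have on_circle: "p \<in> sphere c r" "p' \<in> sphere c r" using assms(3,5,6) by auto
  show "\<forall>q\<in>Y. orient p' p q < 0"
    using orient_pos_outside_arc[OF assms(1,2) on_circle _ assms(9)] orient_perm(3)[where a=p' and b=p]
      assms(4,7) by fastforce
  show "\<forall>q\<in>X. 0 \<le> orient p' p q"
  proof
    fix q assume "q \<in> X"
    then have q: "q \<in> sphere c r" "\<theta> p \<le> \<theta> q" "\<theta> q \<le> \<theta> p'" using assms(3,8) by auto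
    consider "\<theta> q = \<theta> p" | "\<theta> q = \<theta> p'" | "\<theta> p < \<theta> q \<and> \<theta> q < \<theta> p'" using q(2,3) by linarith
    then show "0 \<le> orient p' p q"
    proof cases
      case 1
      then show ?thesis using angle_coord_inj[OF assms(1) q(1) on_circle(1)] orient_self by simp
    next
      case 2
      then show ?thesis using angle_coord_inj[OF assms(1) q(1) on_circle(2)] orient_self by simp
    next
      case 3
      then show ?thesis
        using orient_neg_inside_arc[OF assms(1,2) on_circle q(1)] orient_perm(3)[where a=p' and b=p and q=q]
        by simp
    qed
  qed
qed

lemma convex_hulls_disjoint_if_unlinked:
  assumes "angle_coord c r \<theta>" "r > 0" "X \<subseteq> sphere c r" "Y \<subseteq> sphere c r" "finite X" "X \<noteq> {}"
    and "unlinked (\<theta> ` X) (\<theta> ` Y)"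
  shows "convex hull X \<inter> convex hull Y = {}"
proof (cases "Y = {}")
  case False
  then obtain q0 where q0: "q0 \<in> Y" by blast
  define \<Theta> where "\<Theta> = \<theta> ` X"
  have fin: "finite \<Theta>" "\<Theta> \<noteq> {}" using assms(5,6) unfolding \<Theta>_def by auto
  obtain pa pb where pa: "pa \<in> X" "\<theta> pa = Min \<Theta>" and pb: "pb \<in> X" "\<theta> pb = Max \<Theta>"
    using Min_in[OF fin] Max_in[OF fin] unfolding \<Theta>_def by auto
  have range: "\<theta> pa \<le> \<theta> q \<and> \<theta> q \<le> \<theta> pb" if "q \<in> X" for q
    using pa pb fin that unfolding \<Theta>_def by auto
  show ?thesis
  proof (cases "\<theta> pa < \<theta> pb")
    case False
    have "q = pa" if "q \<in> X" for q
    proof -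
      have "\<theta> q = \<theta> pa" using range[OF that] False by linarith
      then show ?thesis using angle_coord_inj[OF assms(1)] assms(3) that pa(1) by blast
    qed
    then have "X = {pa}" using pa(1) by blast
    moreover have "pa \<notin> Y" using unlinked_distinct[OF assms(7)] pa(1) by blast
    ultimately show ?thesis using convex_hull_disjoint_sphere_point assms(3,4) by blast
  next
    case True
    show ?thesis
    proof (cases "\<theta> pa < \<theta> q0 \<and> \<theta> q0 < \<theta> pb")
      case True
      then obtain a b where "a \<in> \<Theta>" "b \<in> \<Theta>" "a < b" "\<forall>z\<in>\<theta> ` Y. a < z \<and> z < b"
        "\<forall>x\<in>\<Theta>. x \<le> a \<or> b \<le> x"
        using unlinked_in_gap[OF assms(7)[folded \<Theta>_def] fin(1), of "\<theta> pa" "\<theta> pb" "\<theta> q0"] pa pb q0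
        unfolding \<Theta>_def by blast
      then obtain p p' where "p \<in> X" "p' \<in> X" "\<theta> p < \<theta> p'" "\<forall>q\<in>Y. \<theta> p < \<theta> q \<and> \<theta> q < \<theta> p'"
        "\<forall>q\<in>X. \<theta> q \<le> \<theta> p \<or> \<theta> p' \<le> \<theta> q"
        unfolding \<Theta>_def by auto
      then show ?thesis using convex_hulls_disjoint_inside_arc[OF assms(1-4)] by blast
    next
      case False
      have "\<theta> q0 \<noteq> \<theta> pa" "\<theta> q0 \<noteq> \<theta> pb" using unlinked_distinct[OF assms(7)] q0 pa(1) pb(1) by blast+
      then have "\<theta> q0 < Min \<Theta> \<or> Max \<Theta> < \<theta> q0" using False pa pb by linarith
      then have "\<theta> q < \<theta> pa \<or> \<theta> pb < \<theta> q" if "q \<in> Y" for q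
        using unlinked_outside_range[OF assms(7)[folded \<Theta>_def] fin imageI[OF q0] _ imageI[OF that]]
        unfolding pa(2) pb(2) by blast
      then show ?thesis
        using convex_hulls_disjoint_outside_arc[OF assms(1-4) pa(1) pb(1) _ _ True] range by blast
    qed
  qed
qed simp

lemma convex_hulls_disjoint_iff_unlinked:
  assumes "angle_coord c r \<theta>" "r > 0" "X \<subseteq> sphere c r" "Y \<subseteq> sphere c r" "finite X" "X \<noteq> {}"
  shows "convex hull X \<inter> convex hull Y = {} \<longleftrightarrow> unlinked (\<theta> ` X) (\<theta> ` Y)"
  using convex_hulls_disjoint_if_unlinked[OF assms] unlinked_if_convex_hulls_disjoint[OF assms(1-4)]
  by blast

section \<open>Theta subgraphs\<close>

definition adjacent :: "nat set set \<Rightarrow> nat \<Rightarrow> nat \<Rightarrow> bool" where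
  "adjacent E x y \<longleftrightarrow> x \<noteq> y \<and> {x, y} \<in> E"

definition nonadjacent :: "nat set set \<Rightarrow> nat \<Rightarrow> nat \<Rightarrow> bool" where
  "nonadjacent E x y \<longleftrightarrow> x \<noteq> y \<and> {x, y} \<notin> E"

definition theta_arm :: "nat set set \<Rightarrow> nat \<Rightarrow> nat \<Rightarrow> nat list \<Rightarrow> bool" where
  "theta_arm E a b p \<longleftrightarrow> 2 \<le> length p \<and> successively (adjacent E) (a # p @ [b]) \<and>
     (\<forall>x\<in>set (tl p). nonadjacent E a x) \<and> (\<forall>x\<in>set (butlast p). nonadjacent E x b)"

definition theta_subgraph ::
    "nat set set \<Rightarrow> nat \<Rightarrow> nat \<Rightarrow> nat list \<Rightarrow> nat list \<Rightarrow> nat list \<Rightarrow> bool" where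
  "theta_subgraph E a b p q s \<longleftrightarrow> nonadjacent E a b \<and>
     theta_arm E a b p \<and> theta_arm E a b q \<and> theta_arm E a b s \<and>
     (\<forall>x\<in>set p. \<forall>y\<in>set q. nonadjacent E x y) \<and> (\<forall>x\<in>set p. \<forall>y\<in>set s. nonadjacent E x y) \<and>
     (\<forall>x\<in>set q. \<forall>y\<in>set s. nonadjacent E x y)"

definition unlinked_model :: "nat set \<Rightarrow> nat set set \<Rightarrow> (nat \<Rightarrow> real set) \<Rightarrow> bool" where
  "unlinked_model V E S \<longleftrightarrow> (\<forall>x\<in>V. finite (S x) \<and> S x \<noteq> {}) \<and>
     (\<forall>x\<in>V. \<forall>y\<in>V. x \<noteq> y \<longrightarrow> (unlinked (S x) (S y) \<longleftrightarrow> {x, y} \<notin> E))"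

lemma unlinked_model_adjacent:
  "unlinked_model V E S \<Longrightarrow> x \<in> V \<Longrightarrow> y \<in> V \<Longrightarrow> adjacent E x y \<Longrightarrow> \<not> unlinked (S x) (S y)"
  unfolding unlinked_model_def adjacent_def by blast

lemma unlinked_model_nonadjacent:
  "unlinked_model V E S \<Longrightarrow> x \<in> V \<Longrightarrow> y \<in> V \<Longrightarrow> nonadjacent E x y \<Longrightarrow> unlinked (S x) (S y)"
  unfolding unlinked_model_def nonadjacent_def by blast

lemma unlinked_model_walk:
  "unlinked_model V E S \<Longrightarrow> set xs \<subseteq> V \<Longrightarrow> successively (adjacent E) xs
    \<Longrightarrow> successively (\<lambda>x y. \<not> unlinked (S x) (S y)) xs"
  by (erule successively_mono) (use unlinked_model_adjacent in blast)

lemma unlinked_model_angles: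
  assumes "angle_coord c r \<theta>" "r > 0"
    and "\<forall>x\<in>V. finite (P x) \<and> P x \<noteq> {} \<and> P x \<subseteq> sphere c r"
    and "\<forall>x\<in>V. \<forall>y\<in>V. x \<noteq> y \<longrightarrow> ({x, y} \<in> E \<longleftrightarrow> convex hull P x \<inter> convex hull P y \<noteq> {})"
  shows "unlinked_model V E (\<lambda>x. \<theta> ` P x)"
  unfolding unlinked_model_def using assms convex_hulls_disjoint_iff_unlinked[OF assms(1,2)] by auto

lemma unlinked_model_arm:
  assumes "unlinked_model V E S" "theta_arm E a b p" "insert a (insert b (set p)) \<subseteq> V"
  defines "T \<equiv> \<Union>x\<in>set (tl p). S x"
  shows "\<not> unlinked (S a) (S (hd p))" "\<not> unlinked (S (hd p)) T" "\<not> unlinked (S b) T"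
    and "unlinked (S a) T" "unlinked (S b) (S (hd p))"
    and "successively (\<lambda>x y. \<not> unlinked (S x) (S y)) p"
proof -
  obtain h t where p: "p = h # t" and "t \<noteq> []"
    using assms(2) unfolding theta_arm_def by (force simp: numeral_2_eq_2 Suc_le_length_iff)
  have "adjacent E a h" "successively (adjacent E) ((h # t) @ [b])"
    using assms(2) unfolding theta_arm_def p by (simp_all add: successively_Cons)
  then have walk: "adjacent E a h" "successively (adjacent E) p" "adjacent E (last t) b"
    using \<open>t \<noteq> []\<close> unfolding successively_append_iff p by auto
  have inV: "a \<in> V" "b \<in> V" "h \<in> V" "set t \<subseteq> V" using assms(3) p by auto
  have T: "T = (\<Union>x\<in>set t. S x)" unfolding T_def p by simp
  show chain: "successively (\<lambda>x y. \<not> unlinked (S x) (S y)) p"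
    using unlinked_model_walk[OF assms(1) _ walk(2)] assms(3) by simp
  show "\<not> unlinked (S a) (S (hd p))" using unlinked_model_adjacent[OF assms(1) _ _ walk(1)] inV p by simp
  have "\<not> unlinked (S h) (S (hd t))"
    using chain \<open>t \<noteq> []\<close> unfolding p by (simp add: successively_Cons)
  then show "\<not> unlinked (S (hd p)) T"
    using linked_mono[OF _ order_refl, of "S h" "S (hd t)" T] \<open>t \<noteq> []\<close> unfolding p T by (simp add: SUP_upper)
  have "\<not> unlinked (S (last t)) (S b)"
    using unlinked_model_adjacent[OF assms(1) _ _ walk(3)] inV last_in_set[OF \<open>t \<noteq> []\<close>] by blast
  then show "\<not> unlinked (S b) T"
    using linked_mono[of "S b" "S (last t)" "S b" T] unlinked_sym \<open>t \<noteq> []\<close> unfolding T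
    by (meson SUP_upper last_in_set order_refl)
  have "\<forall>x\<in>set t. unlinked (S a) (S x)"
    using assms(2) inV unlinked_model_nonadjacent[OF assms(1)] unfolding theta_arm_def p by auto
  then show "unlinked (S a) T"
    using unlinked_UN_chain[of S t "S a"] chain \<open>t \<noteq> []\<close> unfolding p T by (simp add: successively_Cons)
  have "nonadjacent E h b"
    using assms(2) \<open>t \<noteq> []\<close> unfolding theta_arm_def p by simp
  then show "unlinked (S b) (S (hd p))"
    using unlinked_model_nonadjacent[OF assms(1)] unlinked_sym inV p by auto
qed

lemma unlinked_model_arms:
  assumes "unlinked_model V E S" "theta_arm E a b p" "theta_arm E a b q"
    and "insert a (insert b (set p \<union> set q)) \<subseteq> V" "\<forall>x\<in>set p. \<forall>y\<in>set q. nonadjacent E x y"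
  shows "unlinked (\<Union>x\<in>set p. S x) (\<Union>y\<in>set q. S y)"
proof -
  have "insert a (insert b (set p)) \<subseteq> V" "insert a (insert b (set q)) \<subseteq> V" using assms(4) by auto
  then have chains: "successively (\<lambda>x y. \<not> unlinked (S x) (S y)) p"
      "successively (\<lambda>x y. \<not> unlinked (S x) (S y)) q"
    using unlinked_model_arm(6)[OF assms(1,2)] unlinked_model_arm(6)[OF assms(1,3)] by blast+
  have "p \<noteq> []" "q \<noteq> []" using assms(2,3) unfolding theta_arm_def by auto
  have "unlinked (S x) (\<Union>y\<in>set q. S y)" if "x \<in> set p" for x
  proof (rule unlinked_UN_chain[OF chains(2) \<open>q \<noteq> []\<close>], intro ballI)
    fix y assume "y \<in> set q"
    then show "unlinked (S x) (S y)"
      by (intro unlinked_model_nonadjacent[OF assms(1)]) (use assms(4,5) that in auto)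
  qed
  then have "unlinked (\<Union>y\<in>set q. S y) (\<Union>x\<in>set p. S x)"
    using unlinked_UN_chain[OF chains(1) \<open>p \<noteq> []\<close>] unlinked_sym by blast
  then show ?thesis by (rule unlinked_sym)
qed

lemma unlinked_model_theta_first:
  assumes "unlinked_model V E S" "theta_subgraph E a b p q s"
    and "insert a (insert b (set p \<union> set q \<union> set s)) \<subseteq> V"
  shows "unlinked (S a)
    (S b \<union> (\<Union>x\<in>set (tl p). S x) \<union> (\<Union>x\<in>set (tl q). S x) \<union> (\<Union>x\<in>set (tl s). S x))"
proof (rule unlinked_Un_star)
  have arms: "theta_arm E a b p" "theta_arm E a b q" "theta_arm E a b s" "nonadjacent E a b"
    using assms(2) unfolding theta_subgraph_def by blast+
  have V: "insert a (insert b (set p)) \<subseteq> V" "insert a (insert b (set q)) \<subseteq> V"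
    "insert a (insert b (set s)) \<subseteq> V" "a \<in> V" "b \<in> V"
    using assms(3) by auto
  show "unlinked (S a) (S b)" by (rule unlinked_model_nonadjacent[OF assms(1) V(4,5) arms(4)])
  show "unlinked (S a) (\<Union>x\<in>set (tl p). S x)" "\<not> unlinked (S b) (\<Union>x\<in>set (tl p). S x)"
    using unlinked_model_arm(3,4)[OF assms(1) arms(1) V(1)] by simp_all
  show "unlinked (S a) (\<Union>x\<in>set (tl q). S x)" "\<not> unlinked (S b) (\<Union>x\<in>set (tl q). S x)"
    using unlinked_model_arm(3,4)[OF assms(1) arms(2) V(2)] by simp_all
  show "unlinked (S a) (\<Union>x\<in>set (tl s). S x)" "\<not> unlinked (S b) (\<Union>x\<in>set (tl s). S x)"
    using unlinked_model_arm(3,4)[OF assms(1) arms(3) V(3)] by simp_all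
qed

lemma unlinked_model_theta_contra:
  assumes model: "unlinked_model V E S" and theta: "theta_subgraph E a b p q s"
    and V: "insert a (insert b (set p \<union> set q \<union> set s)) \<subseteq> V"
    and first: "\<forall>x\<in>S a. \<forall>y\<in>S b \<union> (\<Union>x\<in>set (tl p). S x) \<union> (\<Union>x\<in>set (tl q). S x)
      \<union> (\<Union>x\<in>set (tl s). S x). x < y"
  shows False
proof -
  have arms: "theta_arm E a b p" "theta_arm E a b q" "theta_arm E a b s" "nonadjacent E a b"
    using theta unfolding theta_subgraph_def by blast+
  have inV: "insert a (insert b (set p)) \<subseteq> V" "insert a (insert b (set q)) \<subseteq> V"
    "insert a (insert b (set s)) \<subseteq> V" "insert a (insert b (set p \<union> set q)) \<subseteq> V"
    "insert a (insert b (set p \<union> set s)) \<subseteq> V" "insert a (insert b (set q \<union> set s)) \<subseteq> V"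
    "a \<in> V" "b \<in> V"
    using V by auto
  note p = unlinked_model_arm[OF model arms(1) inV(1)]
  note q = unlinked_model_arm[OF model arms(2) inV(2)]
  note s = unlinked_model_arm[OF model arms(3) inV(3)]
  have whole_arm: "(\<Union>x\<in>set r. S x) = S (hd r) \<union> (\<Union>x\<in>set (tl r). S x)" if "theta_arm E a b r" for r
    using that unfolding theta_arm_def by (cases r) auto
  have "unlinked (S b) (S a)"
    using unlinked_model_nonadjacent[OF model inV(7,8) arms(4)] by (rule unlinked_sym)
  then have C_unlinked: "unlinked (S b) (S a \<union> S (hd p) \<union> S (hd q) \<union> S (hd s))"
    using unlinked_Un_star p(1,5) q(1,5) s(1,5) by blast
  have fin: "finite (S a)" "finite (S b)" "S a \<noteq> {}" "S b \<noteq> {}"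
    using model inV(7,8) unfolding unlinked_model_def by auto
  have nonadj: "\<forall>x\<in>set p. \<forall>y\<in>set q. nonadjacent E x y" "\<forall>x\<in>set p. \<forall>y\<in>set s. nonadjacent E x y"
    "\<forall>x\<in>set q. \<forall>y\<in>set s. nonadjacent E x y"
    using theta unfolding theta_subgraph_def by blast+
  show False
  proof (rule no_unlinked_theta_on_line[OF fin first C_unlinked
        p(1) q(1) s(1) p(3) q(3) s(3) p(2) q(2) s(2)])
    show "unlinked (S (hd p) \<union> (\<Union>x\<in>set (tl p). S x)) (S (hd q) \<union> (\<Union>x\<in>set (tl q). S x))"
      using unlinked_model_arms[OF model arms(1,2) inV(4) nonadj(1)]
      unfolding whole_arm[OF arms(1)] whole_arm[OF arms(2)] .
    show "unlinked (S (hd p) \<union> (\<Union>x\<in>set (tl p). S x)) (S (hd s) \<union> (\<Union>x\<in>set (tl s). S x))"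
      using unlinked_model_arms[OF model arms(1,3) inV(5) nonadj(2)]
      unfolding whole_arm[OF arms(1)] whole_arm[OF arms(3)] .
    show "unlinked (S (hd q) \<union> (\<Union>x\<in>set (tl q). S x)) (S (hd s) \<union> (\<Union>x\<in>set (tl s). S x))"
      using unlinked_model_arms[OF model arms(2,3) inV(6) nonadj(3)]
      unfolding whole_arm[OF arms(2)] whole_arm[OF arms(3)] .
  qed
qed

text \<open>Cutting the circle open just before the polygon of \<open>a\<close> puts its angles before those of
  every polygon it does not meet.\<close>
theorem theta_subgraph_not_k_polygon_circle:
  assumes "theta_subgraph E a b p q s" "insert a (insert b (set p \<union> set q \<union> set s)) \<subseteq> V" "0 < k"
  shows "\<not> k_polygon_circle V E k"
proof
  assume "k_polygon_circle V E k"
  then obtain c :: "real^2" and r and P where "r > 0"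
    and P_card: "\<forall>x\<in>V. finite (P x) \<and> card (P x) = k \<and> P x \<subseteq> sphere c r"
    and hulls: "\<forall>x\<in>V. \<forall>y\<in>V. x \<noteq> y \<longrightarrow> ({x, y} \<in> E \<longleftrightarrow> convex hull P x \<inter> convex hull P y \<noteq> {})"
    unfolding k_polygon_circle_def by blast
  have P: "\<forall>x\<in>V. finite (P x) \<and> P x \<noteq> {} \<and> P x \<subseteq> sphere c r"
    using P_card \<open>0 < k\<close> by fastforce
  have model: "unlinked_model V E (\<lambda>x. \<theta> ` P x)" if "angle_coord c r \<theta>" for \<theta>
    using unlinked_model_angles[OF that \<open>r > 0\<close> P hulls] .
  define T where "T = (\<lambda>\<theta> :: real^2 \<Rightarrow> real. \<theta> ` P b \<union> (\<Union>x\<in>set (tl p). \<theta> ` P x)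
    \<union> (\<Union>x\<in>set (tl q). \<theta> ` P x) \<union> (\<Union>x\<in>set (tl s). \<theta> ` P x))"
  have "unlinked (circle_angle c ` P a) (T (circle_angle c))"
    using unlinked_model_theta_first[OF model[OF angle_coord_circle_angle] assms(1,2)] unfolding T_def .
  moreover have "finite (circle_angle c ` P a)" "circle_angle c ` P a \<noteq> {}" "T (circle_angle c) \<noteq> {}"
    using P assms(2) unfolding T_def by auto
  moreover have "\<forall>x\<in>circle_angle c ` P a \<union> T (circle_angle c). - pi < x \<and> x \<le> pi"
    using circle_angle_bounds unfolding T_def by blast
  ultimately obtain t where "\<forall>z\<in>circle_angle c ` P a. \<forall>x\<in>T (circle_angle c). unwrap t z < unwrap t x"
    using unwrap_separates by metis
  moreover have "T (unwrap t \<circ> circle_angle c) = unwrap t ` T (circle_angle c)"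
    unfolding T_def by (simp add: image_Un image_UN image_comp)
  ultimately have "\<forall>z\<in>(unwrap t \<circ> circle_angle c) ` P a. \<forall>x\<in>T (unwrap t \<circ> circle_angle c). z < x"
    by auto
  then show False
    using unlinked_model_theta_contra[OF model[OF angle_coord_unwrap] assms(1,2)] unfolding T_def by simp
qed

section \<open>The crossed graph\<close>

lemma successively_upt:
  "(\<And>t. m \<le> t \<Longrightarrow> Suc t < k \<Longrightarrow> P t (Suc t)) \<Longrightarrow> successively P [m..<k]"
proof (induction k)
  case (Suc k)
  show ?case
  proof (cases "m < k")
    case True
    then have "P (k - 1) k" using Suc.prems[of "k - 1"] by simp
    moreover have "successively P [m..<k]" using Suc by simp
    ultimately show ?thesis using True by (simp add: successively_append_iff last_upt)
  next
    case False
    then show ?thesis by (cases "m = k") simp_all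
  qed
qed simp

definition crossed_M_edges :: "nat \<Rightarrow> nat \<Rightarrow> nat \<Rightarrow> nat set set" where
  "crossed_M_edges n i j =
     (M_edges n - {{4*n+i, 5*n+i}, {4*n+j, 5*n+j}}) \<union> {{4*n+i, 5*n+j}, {4*n+j, 5*n+i}}"

lemma crossed_M_edges_commute: "crossed_M_edges n i j = crossed_M_edges n j i"
  unfolding crossed_M_edges_def by (auto simp: insert_commute)

lemma crossing_M_edges:
  assumes "i \<in> {1..n}" "j \<in> {1..n}" "i \<noteq> j"
  shows "crossing (M_edges n) (H_edges n j) (sigma_ij n i j) = crossed_M_edges n i j"
proof -
  define s where "s = sigma_ij n i j"
  have inj: "inj_on (sigma n j) (H_vertices n 1)"
    using assms unfolding inj_on_def H_vertices_def sigma_def by auto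
  have "the_inv_into (H_vertices n 1) (sigma n j) (4*n+j) = 5*n+1"
    "the_inv_into (H_vertices n 1) (sigma n j) (5*n+j) = 4*n+1"
    by (rule the_inv_into_f_eq[OF inj]; use assms in \<open>auto simp: sigma_def H_vertices_def\<close>)+
  then have s: "s (4*n+j) = 4*n+i" "s (5*n+j) = 5*n+i"
    using assms unfolding s_def sigma_ij_def by (simp_all add: sigma_def)
  have hub: "{4*n+i, 5*n+i} \<in> M_edges n" using assms unfolding M_edges_def by blast
  have H: "{u, v} \<in> H_edges n j \<and> u \<noteq> v \<longleftrightarrow> u = 4*n+j \<and> v = 5*n+j \<or> u = 5*n+j \<and> v = 4*n+j"
    for u v
    unfolding H_edges_def using assms by (auto simp: doubleton_eq_iff)
  have "{e. e \<in> H_edges n j \<and> s ` e \<in> M_edges n} = {{4*n+j, 5*n+j}}"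
    "{s ` e |e. e \<in> H_edges n j \<and> s ` e \<in> M_edges n} = {{4*n+i, 5*n+i}}"
    using s hub unfolding H_edges_def by auto
  moreover have "{{u, s v} |u v. {u, v} \<in> H_edges n j \<and> u \<noteq> v \<and> {s u, s v} \<in> M_edges n}
      = {{u, s v} |u v. u = 4*n+j \<and> v = 5*n+j \<or> u = 5*n+j \<and> v = 4*n+j}"
  proof -
    have "{s u, s v} \<in> M_edges n" if "u = 4*n+j \<and> v = 5*n+j \<or> u = 5*n+j \<and> v = 4*n+j" for u v
      using that s hub by (auto simp: insert_commute)
    then have "{u, v} \<in> H_edges n j \<and> u \<noteq> v \<and> {s u, s v} \<in> M_edges n
        \<longleftrightarrow> u = 4*n+j \<and> v = 5*n+j \<or> u = 5*n+j \<and> v = 4*n+j" for u v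
      using H[of u v] by blast
    then show ?thesis by (simp only:)
  qed
  moreover have "{{u, s v} |u v. u = 4*n+j \<and> v = 5*n+j \<or> u = 5*n+j \<and> v = 4*n+j}
      = {{4*n+j, s (5*n+j)}, {5*n+j, s (4*n+j)}}"
    by blast
  ultimately show ?thesis
    unfolding crossing_def crossed_M_edges_def s_def[symmetric] s by (auto simp: insert_commute)
qed

lemma M_edges_path: "1 \<le> t \<Longrightarrow> t < 4*n \<Longrightarrow> {t, t + 1} \<in> M_edges n"
  unfolding M_edges_def by blast

lemma M_edges_spoke:
  assumes "l < n"
  shows "{4*l+1, 4*n+l+1} \<in> M_edges n" "{4*l+2, 5*n+l+1} \<in> M_edges n"
  unfolding M_edges_def using assms by (intro UnI2 UN_I[of "l+1"]; force)+

lemma M_edge_in_crossed_M_edges: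
  "{x, y} \<in> M_edges n \<Longrightarrow> x \<le> 4*n \<Longrightarrow> 0 < i \<Longrightarrow> 0 < j \<Longrightarrow> {x, y} \<in> crossed_M_edges n i j"
  unfolding crossed_M_edges_def by (auto simp: doubleton_eq_iff)

text \<open>The edges of the crossed graph leaving the path \<open>v_1, \<dots>, v_{4n}\<close>, written without
  subtraction so that linear arithmetic can refute them.\<close>
definition crossed_off_path_edge :: "nat \<Rightarrow> nat \<Rightarrow> nat \<Rightarrow> nat \<Rightarrow> nat \<Rightarrow> bool" where
  "crossed_off_path_edge n i j x y \<longleftrightarrow>
     4*n < y \<and> y \<le> 5*n \<and> x + 3 + 16*n = 4*y \<or> 5*n < y \<and> y \<le> 6*n \<and> x + 2 + 20*n = 4*y \<or>
     4*n < x \<and> x \<le> 5*n \<and> y = x + n \<and> x \<noteq> 4*n+i \<and> x \<noteq> 4*n+j \<or>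
     x = 4*n+i \<and> y = 5*n+j \<or> x = 4*n+j \<and> y = 5*n+i"

lemma crossed_M_edges_cases:
  assumes "{x, y} \<in> crossed_M_edges n i j"
  shows "(x = y + 1 \<or> y = x + 1) \<and> x \<le> 4*n \<and> y \<le> 4*n
    \<or> crossed_off_path_edge n i j x y \<or> crossed_off_path_edge n i j y x"
proof -
  have spoke_a: "crossed_off_path_edge n i j (4*l-3) (4*n+l)" if "l \<in> {1..n}" for l
    unfolding crossed_off_path_edge_def by (rule disjI1) (use that in auto)
  have spoke_b: "crossed_off_path_edge n i j (4*l-2) (5*n+l)" if "l \<in> {1..n}" for l
    unfolding crossed_off_path_edge_def by (rule disjI2, rule disjI1) (use that in auto)
  have rung: "crossed_off_path_edge n i j (4*n+l) (5*n+l)"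
    if "l \<in> {1..n}" "l \<noteq> i" "l \<noteq> j" for l
    unfolding crossed_off_path_edge_def by (rule disjI2, rule disjI2, rule disjI1) (use that in auto)
  have crossed:
    "crossed_off_path_edge n i j (4*n+i) (5*n+j)" "crossed_off_path_edge n i j (4*n+j) (5*n+i)"
    unfolding crossed_off_path_edge_def by simp_all
  consider "{x, y} \<in> M_edges n" "{x, y} \<noteq> {4*n+i, 5*n+i}" "{x, y} \<noteq> {4*n+j, 5*n+j}"
    | "{x, y} = {4*n+i, 5*n+j}" | "{x, y} = {4*n+j, 5*n+i}"
    using assms unfolding crossed_M_edges_def by blast
  then show ?thesis
  proof cases
    case 1
    from 1(1) consider t where "1 \<le> t" "t < 4*n" "{x, y} = {t, t + 1}"
      | l where "l \<in> {1..n}" "{x, y} = {4*l-3, 4*n+l} \<or> {x, y} = {4*l-2, 5*n+l}"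
      | l where "l \<in> {1..n}" "{x, y} = {4*n+l, 5*n+l}"
      unfolding M_edges_def by auto
    then show ?thesis
    proof cases
      case 2
      then show ?thesis using spoke_a spoke_b by (auto simp: doubleton_eq_iff)
    next
      case (3 l)
      then have "l \<noteq> i" "l \<noteq> j" using 1(2,3) by auto
      then show ?thesis using rung 3 by (auto simp: doubleton_eq_iff)
    qed (auto simp: doubleton_eq_iff)
  qed (use crossed in \<open>auto simp: doubleton_eq_iff\<close>)
qed

lemma nonadjacent_crossed_M_edges:
  "x \<noteq> y \<Longrightarrow> \<not> ((x = y + 1 \<or> y = x + 1) \<and> x \<le> 4*n \<and> y \<le> 4*n) \<Longrightarrow>
    \<not> crossed_off_path_edge n i j x y \<Longrightarrow> \<not> crossed_off_path_edge n i j y x \<Longrightarrow>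
    nonadjacent (crossed_M_edges n i j) x y"
  using crossed_M_edges_cases unfolding nonadjacent_def by blast

text \<open>With \<open>i = a + 1 < j = b + 1\<close>, the vertices \<open>v_{4i-2}\<close> and \<open>v_{4j-3}\<close> are joined by the path
  segment between them, by \<open>v_{5n+i}, v_{4n+j}\<close>, and by \<open>v_{4i-3}, v_{4n+i}, v_{5n+j}, v_{4j-2}\<close>.\<close>
lemma crossed_M_theta_subgraph:
  assumes "a < b" "b < n"
  shows "theta_subgraph (crossed_M_edges n (Suc a) (Suc b)) (4*a+2) (4*b+1)
    [4*a+3..<4*b+1] [5*n+a+1, 4*n+b+1] [4*a+1, 4*n+a+1, 5*n+b+1, 4*b+2]"
proof -
  let ?E = "crossed_M_edges n (Suc a) (Suc b)"
  have path: "adjacent ?E t u" if "u = t + 1" "1 \<le> t" "t < 4*n" for t u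
    using M_edge_in_crossed_M_edges[OF M_edges_path[OF that(2,3)]] that
    unfolding adjacent_def by simp
  have spoke: "adjacent ?E (4*a+2) (5*n+a+1)" "adjacent ?E (4*a+1) (4*n+a+1)"
    "adjacent ?E (5*n+b+1) (4*b+2)" "adjacent ?E (4*n+b+1) (4*b+1)"
    using M_edges_spoke[of a n] M_edges_spoke[of b n] assms
      M_edge_in_crossed_M_edges[of _ _ n "Suc a" "Suc b"]
    unfolding adjacent_def by (auto simp: insert_commute)
  have crossed: "adjacent ?E (5*n+a+1) (4*n+b+1)" "adjacent ?E (4*n+a+1) (5*n+b+1)"
    using assms unfolding adjacent_def crossed_M_edges_def by auto
  have "successively (adjacent ?E) ((4*a+2) # [4*a+3..<4*b+1] @ [4*b+1])"
    using assms by (auto simp: successively_Cons successively_append_iff intro!: successively_upt path)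
  then have "theta_arm ?E (4*a+2) (4*b+1) [4*a+3..<4*b+1]"
    unfolding theta_arm_def using assms
    by (auto intro!: nonadjacent_crossed_M_edges simp: crossed_off_path_edge_def) presburger+
  moreover have "theta_arm ?E (4*a+2) (4*b+1) [5*n+a+1, 4*n+b+1]"
    unfolding theta_arm_def using assms spoke crossed
    by (auto intro!: nonadjacent_crossed_M_edges simp: crossed_off_path_edge_def)
  moreover have "theta_arm ?E (4*a+2) (4*b+1) [4*a+1, 4*n+a+1, 5*n+b+1, 4*b+2]"
    unfolding theta_arm_def using assms spoke crossed path[of _ "4*a+1"] path[of _ "4*b+1"]
    by (auto simp: adjacent_def insert_commute crossed_off_path_edge_def
        intro!: nonadjacent_crossed_M_edges) presburger+
  moreover have "nonadjacent ?E (4*a+2) (4*b+1)"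
    using assms
    by (intro nonadjacent_crossed_M_edges; (simp add: crossed_off_path_edge_def)?; presburger)
  moreover have "nonadjacent ?E x y"
    if "x \<in> {4*a+3..<4*b+1}" "y \<in> {5*n+a+1, 4*n+b+1, 4*a+1, 4*n+a+1, 5*n+b+1, 4*b+2}" for x y
    using that assms by (intro nonadjacent_crossed_M_edges) (auto simp: crossed_off_path_edge_def)
  moreover have "nonadjacent ?E x y"
    if "x \<in> {5*n+a+1, 4*n+b+1}" "y \<in> {4*a+1, 4*n+a+1, 5*n+b+1, 4*b+2}" for x y
    using that assms by (intro nonadjacent_crossed_M_edges) (auto simp: crossed_off_path_edge_def)
  ultimately show ?thesis unfolding theta_subgraph_def by (auto simp del: upt_Suc)
qed

theorem lemma7:
  fixes n k i j :: nat
  assumes "n > 2" and "k > 0"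
    and "i \<in> {1..n}" and "j \<in> {1..n}" and "i \<noteq> j"
  shows "\<not> k_polygon_circle (M_vertices n) (crossing (M_edges n) (H_edges n j) (sigma_ij n i j)) k"
proof -
  define a b where "a = min i j - 1" "b = max i j - 1"
  have "a < b" "b < n" using assms(3-5) unfolding a_b_def by auto
  have E: "crossed_M_edges n i j = crossed_M_edges n (Suc a) (Suc b)"
    using assms(3-5) crossed_M_edges_commute unfolding a_b_def by (cases "i < j") auto
  show ?thesis
    unfolding crossing_M_edges[OF assms(3-5)] M_vertices_def E
    by (intro theta_subgraph_not_k_polygon_circle[OF crossed_M_theta_subgraph[OF \<open>a < b\<close> \<open>b < n\<close>]])
      (use \<open>a < b\<close> \<open>b < n\<close> \<open>k > 0\<close> in auto)
qed

end
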